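(* Consider the online execution scheduling algorithm OES (described in the context) applied to a distributed GNN training job with a fixed task placement. Then at every time step $t$ and for every machine $m\in\{1,\dots,M\}$, the ingress flow degree satisfies $\Delta^m_{in}\le \widehat{\Delta^m_{in}}$ and the egress flow degree satisfies $\Delta^m_{out}\le \widehat{\Delta^m_{out}}$.
   Context: Setting (distributed GNN training job). There are $M$ machines; machine $m$ has available incoming bandwidth $B^m_{in}$ and outgoing bandwidth $B^m_{out}$. The set of tasks is $J=J_g\cup J_s\cup J_w\cup J_{ps}$ (graph store servers, samplers, workers, parameter servers (PSs)); each worker has an associated set of samplers. A fixed placement assigns each task $j$ to exactly one machine ($y^m_j=1$ iff $j$ is on machine $m$). Training runs for $N$ iterations in discrete time steps $t=1,2,\dots$; task $j$ takes execution time $p_j$ in every iteration; $(j,n)$ denotes task $j$ in iteration $n$. Successor relation $succ(j,n)$: $(s,n)\in succ(g,n)$ for every graph store server $g$ and sampler $s$; $(w,n)\in succ(s,n)$ for every sampler $s$ and its associated worker $w$; $(ps,n)\in succ(w,n)$ for every worker $w$ and PS $ps$; $(w,n+1)\in succ(ps,n)$ for every PS $ps$ and worker $w$. For each $(j',n')\in succ(j,n)$ with $j,j'$ on different machines there is a flow $(j,n)\to(j',n')$ of data volume $d_{(j,n)\to(j',n')}$, which may only start after $(j,n)$ finishes, must finish before $(j',n')$ starts, and (inter-iteration dependency) may not start before the flow $(j,n-1)\to(j',n'-1)$ has finished. Also $(j,n+1)$ may start only after $(j,n)$ finishes, and if $j,j'$ are on the same machine, $(j',n')$ may start only after $(j,n)$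 finishes (no transfer needed). Algorithm OES. It maintains a set $F_{act}$ of active flows (started but unfinished) and a set $F_{pend}$ of pending flows (whose source task is finished but whose previous-iteration counterpart $(j,n-1)\to(j',n'-1)$ has not finished). At $t=1$ all graph store servers of iteration 1 start. At each time step $t$: every task $(j,n)$ whose dependencies are all satisfied (all required data received, previous iteration of $j$ done) starts; for every task $(j,n)$ that finished at $t-1$ and every inter-machine flow $(j,n)\to(j',n')$ out of it, the flow is added to $F_{pend}$ if $(j,n-1)\to(j',n'-1)\in F_{act}\cup F_{pend}$, and to $F_{act}$ otherwise; for every flow $(j,n)\to(j',n')$ that finished at $t-1$, if $(j,n+1)\to(j',n'+1)\in F_{pend}$ it is moved to $F_{act}$. Then, with $\Delta^m_{in}$ (resp. $\Delta^m_{out}$) the number of flows in $F_{act}$ whose destination (resp. source) task is on machine $m$, every active flow from a task on machine $m$ to a task on machine $m'$ transmits $\min\{B^{m'}_{in}/\Delta^{m'}_{in},\,B^m_{out}/\Delta^m_{out}\}$ data units at time $t$. One-iteration degrees. Let $F_{one\_iter}$ be the set of all inter-machine flows of one training iteration (including the transfers of parameters updated by the PSs in that iteration to the workers). $\widehat{\Delta^m_{in}}$ (resp. $\widehat{\Delta^m_{out}}$) is the number of flows in $F_{one\_iter}$ whose destination (resp. source) task is placed on machine $m$. *)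

theory Defs
  imports Main "HOL.Real"
begin

datatype task_kind = GraphStore | Sampler | Worker | PServer

text \<open>Flows are triples (j, j', n): the flow from task j in iteration n to task j'
  in iteration n + ioff j j' (offset 1 exactly for PS-to-worker transfers).\<close>
type_synonym 'j flow = "'j \<times> 'j \<times> nat"

record 'j job =
  jb_tasks  :: "'j set"
  jb_kind   :: "'j \<Rightarrow> task_kind"
  jb_assoc  :: "'j \<Rightarrow> 'j \<Rightarrow> bool"
  jb_M      :: nat
  jb_place  :: "'j \<Rightarrow> nat"              \<comment> \<open>y^m_j = 1 iff place j = m\<close>
  jb_ptime  :: "'j \<Rightarrow> nat"
  jb_vol    :: "'j flow \<Rightarrow> real"
  jb_Bin    :: "nat \<Rightarrow> real"
  jb_Bout   :: "nat \<Rightarrow> real"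
  jb_N      :: nat

definition wf_job :: "'j job \<Rightarrow> bool" where
  "wf_job G \<longleftrightarrow> finite (jb_tasks G)
     \<and> (\<forall>j\<in>jb_tasks G. jb_place G j \<in> {1..jb_M G} \<and> jb_ptime G j > 0)
     \<and> (\<forall>m\<in>{1..jb_M G}. jb_Bin G m > 0 \<and> jb_Bout G m > 0)
     \<and> (\<forall>f. jb_vol G f \<ge> 0)"

definition edge :: "'j job \<Rightarrow> 'j \<Rightarrow> 'j \<Rightarrow> bool" where
  "edge G j j' \<longleftrightarrow> j \<in> jb_tasks G \<and> j' \<in> jb_tasks G \<and>
     ((jb_kind G j = GraphStore \<and> jb_kind G j' = Sampler) \<or>
      (jb_kind G j = Sampler \<and> jb_kind G j' = Worker \<and> jb_assoc G j j') \<or>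
      (jb_kind G j = Worker \<and> jb_kind G j' = PServer) \<or>
      (jb_kind G j = PServer \<and> jb_kind G j' = Worker))"

definition ioff :: "'j job \<Rightarrow> 'j \<Rightarrow> 'j \<Rightarrow> nat" where
  "ioff G j j' = (if jb_kind G j = PServer \<and> jb_kind G j' = Worker then 1 else 0)"

definition interm :: "'j job \<Rightarrow> 'j \<Rightarrow> 'j \<Rightarrow> bool" where
  "interm G j j' \<longleftrightarrow> edge G j j' \<and> jb_place G j \<noteq> jb_place G j'"

definition is_flow :: "'j job \<Rightarrow> 'j flow \<Rightarrow> bool" where
  "is_flow G f = (case f of (j, j', n) \<Rightarrow>
      interm G j j' \<and> 1 \<le> n \<and> n + ioff G j j' \<le> jb_N G)"

definition fsrc :: "'j flow \<Rightarrow> 'j \<times> nat" where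
  "fsrc f = (case f of (j, j', n) \<Rightarrow> (j, n))"

definition prevf :: "'j flow \<Rightarrow> 'j flow" where
  "prevf f = (case f of (j, j', n) \<Rightarrow> (j, j', n - 1))"

definition src_mach :: "'j job \<Rightarrow> 'j flow \<Rightarrow> nat" where
  "src_mach G f = jb_place G (fst f)"

definition dst_mach :: "'j job \<Rightarrow> 'j flow \<Rightarrow> nat" where
  "dst_mach G f = jb_place G (fst (snd f))"

text \<open>State after time step t: start times of task instances, cumulative data sent,
  finish times of flows, F_act as used for transmission at step t (before removing the
  flows that finished at t), and F_pend.\<close>
record 'j oes_state =
  started :: "'j \<times> nat \<Rightarrow> nat option"
  sent    :: "'j flow \<Rightarrow> real"
  ffin    :: "'j flow \<Rightarrow> nat option"
  act     :: "'j flow set"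
  pend    :: "'j flow set"

definition oes_init :: "'j oes_state" where
  "oes_init = \<lparr>started = (\<lambda>_. None), sent = (\<lambda>_. 0), ffin = (\<lambda>_. None),
               act = {}, pend = {}\<rparr>"

text \<open>A task instance started at step s runs during steps s, ..., s + p_j - 1 and
  finishes at step s + p_j - 1.\<close>
definition task_done_by :: "'j job \<Rightarrow> 'j oes_state \<Rightarrow> 'j \<times> nat \<Rightarrow> nat \<Rightarrow> bool" where
  "task_done_by G \<sigma> x t \<longleftrightarrow> (\<exists>s. started \<sigma> x = Some s \<and> s + jb_ptime G (fst x) \<le> t + 1)"

definition task_fin_at :: "'j job \<Rightarrow> 'j oes_state \<Rightarrow> 'j \<times> nat \<Rightarrow> nat \<Rightarrow> bool" where
  "task_fin_at G \<sigma> x t \<longleftrightarrow> (\<exists>s. started \<sigma> x = Some s \<and> s + jb_ptime G (fst x) = t + 1)"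

text \<open>Task (j,n) may start at step t (given the state after step t-1).\<close>
definition ready :: "'j job \<Rightarrow> 'j oes_state \<Rightarrow> nat \<Rightarrow> 'j \<times> nat \<Rightarrow> bool" where
  "ready G \<sigma> t x = (case x of (j, n) \<Rightarrow>
      j \<in> jb_tasks G \<and> 1 \<le> n \<and> n \<le> jb_N G \<and> started \<sigma> (j, n) = None \<and>
      (n = 1 \<or> task_done_by G \<sigma> (j, n - 1) (t - 1)) \<and>
      (\<forall>i. edge G i j \<and> ioff G i j < n \<longrightarrow>
         (if jb_place G i = jb_place G j
          then task_done_by G \<sigma> (i, n - ioff G i j) (t - 1)
          else ffin \<sigma> (i, j, n - ioff G i j) \<noteq> None)))"

definition oes_step :: "'j job \<Rightarrow> 'j oes_state \<Rightarrow> nat \<Rightarrow> 'j oes_state" where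
  "oes_step G \<sigma> t = (
     let st1 = (\<lambda>x. if ready G \<sigma> t x then Some t else started \<sigma> x);
         A = {f \<in> act \<sigma>. ffin \<sigma> f = None};
         P = pend \<sigma>;
         new = {f. is_flow G f \<and> task_fin_at G \<sigma> (fsrc f) (t - 1)};
         moved = {f \<in> P. ffin \<sigma> (prevf f) = Some (t - 1)};
         act1 = A \<union> moved \<union> {f \<in> new. prevf f \<notin> A \<union> P};
         pend1 = (P - moved) \<union> {f \<in> new. prevf f \<in> A \<union> P};
         din = (\<lambda>m. card {g \<in> act1. dst_mach G g = m});
         dout = (\<lambda>m. card {g \<in> act1. src_mach G g = m});
         rate = (\<lambda>f. min (jb_Bin G (dst_mach G f) / real (din (dst_mach G f)))
                         (jb_Bout G (src_mach G f) / real (dout (src_mach G f))));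
         sent1 = (\<lambda>f. if f \<in> act1 then sent \<sigma> f + rate f else sent \<sigma> f);
         ffin1 = (\<lambda>f. if f \<in> act1 \<and> jb_vol G f \<le> sent1 f then Some t else ffin \<sigma> f)
     in \<lparr>started = st1, sent = sent1, ffin = ffin1, act = act1, pend = pend1\<rparr>)"

fun oes_run :: "'j job \<Rightarrow> nat \<Rightarrow> 'j oes_state" where
  "oes_run G 0 = oes_init"
| "oes_run G (Suc t) = oes_step G (oes_run G t) (Suc t)"

definition Delta_in :: "'j job \<Rightarrow> nat \<Rightarrow> nat \<Rightarrow> nat" where
  "Delta_in G t m = card {f \<in> act (oes_run G t). dst_mach G f = m}"

definition Delta_out :: "'j job \<Rightarrow> nat \<Rightarrow> nat \<Rightarrow> nat" where
  "Delta_out G t m = card {f \<in> act (oes_run G t). src_mach G f = m}"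

text \<open>One-iteration degrees: F_one_iter contains one flow per inter-machine successor
  pair (j, j') (including PS-to-worker parameter transfers).\<close>
definition hat_Delta_in :: "'j job \<Rightarrow> nat \<Rightarrow> nat" where
  "hat_Delta_in G m = card {(j, j'). interm G j j' \<and> jb_place G j' = m}"

definition hat_Delta_out :: "'j job \<Rightarrow> nat \<Rightarrow> nat" where
  "hat_Delta_out G m = card {(j, j'). interm G j j' \<and> jb_place G j = m}"

end

theory Submission
  imports Defs
begin

(* Fix a pair (j, j') of tasks on different machines. OES activates the flow of iteration n of
   this pair only after the flow of iteration n - 1 has finished: a flow released while its
   predecessor is still active or pending is parked in F_pend and moved to F_act in the step
   after the predecessor finishes. So all predecessors of an active flow finished at an earlier
   step, while an active flow finishes at the current step at the earliest. Hence F_act holds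
   at most one flow per pair, and (j, j', n) \<mapsto> (j, j') injects the active flows entering
   (leaving) machine m into the one-iteration flows entering (leaving) m. *)

lemma fsrc_conv [simp]: "fsrc (j, j', n) = (j, n)"
  by (simp add: fsrc_def)

lemma prevf_conv [simp]: "prevf (j, j', n) = (j, j', n - 1)"
  by (simp add: prevf_def)

lemma is_flow_iff: "is_flow G (j, j', n) \<longleftrightarrow> interm G j j' \<and> 1 \<le> n \<and> n + ioff G j j' \<le> jb_N G"
  by (simp add: is_flow_def)

lemma is_flow_earlier: "is_flow G (j, j', n) \<Longrightarrow> 1 \<le> k \<Longrightarrow> k \<le> n \<Longrightarrow> is_flow G (j, j', k)"
  by (auto simp: is_flow_iff)

lemma is_flow_ptime_pos: "wf_job G \<Longrightarrow> is_flow G (j, j', n) \<Longrightarrow> 0 < jb_ptime G j"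
  by (auto simp: is_flow_iff interm_def edge_def wf_job_def)

definition task_done_before :: "'j job \<Rightarrow> 'j oes_state \<Rightarrow> 'j \<times> nat \<Rightarrow> nat \<Rightarrow> bool" where
  "task_done_before G \<sigma> x T \<longleftrightarrow> (\<exists>s. started \<sigma> x = Some s \<and> s + jb_ptime G (fst x) \<le> T)"

lemma task_fin_at_not_done_before: "task_fin_at G \<sigma> x t \<Longrightarrow> \<not> task_done_before G \<sigma> x t"
  by (auto simp: task_fin_at_def task_done_before_def)

lemma started_oes_step:
  "started (oes_step G \<sigma> t) x = (if ready G \<sigma> t x then Some t else started \<sigma> x)"
  by (simp add: oes_step_def Let_def)

lemma started_oes_step_keep: "started \<sigma> x = Some s \<Longrightarrow> started (oes_step G \<sigma> t) x = Some s"
  by (cases x) (simp add: started_oes_step ready_def)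

lemma started_oes_step_cases:
  "started (oes_step G \<sigma> t) x = Some s \<Longrightarrow> started \<sigma> x = Some s \<or> s = t \<and> ready G \<sigma> t x"
  by (auto simp: started_oes_step split: if_splits)

lemma task_done_before_oes_step:
  "task_done_before G \<sigma> x T \<Longrightarrow> T \<le> T' \<Longrightarrow> task_done_before G (oes_step G \<sigma> t) x T'"
  by (force simp: task_done_before_def dest: started_oes_step_keep)

lemma act_oes_step:
  "act (oes_step G \<sigma> t) = {f \<in> act \<sigma>. ffin \<sigma> f = None}
     \<union> {f \<in> pend \<sigma>. ffin \<sigma> (prevf f) = Some (t - 1)}
     \<union> {f. is_flow G f \<and> task_fin_at G \<sigma> (fsrc f) (t - 1)
           \<and> prevf f \<notin> {f \<in> act \<sigma>. ffin \<sigma> f = None} \<union> pend \<sigma>}"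
  by (auto simp: oes_step_def Let_def)

lemma pend_oes_step:
  "pend (oes_step G \<sigma> t) = {f \<in> pend \<sigma>. ffin \<sigma> (prevf f) \<noteq> Some (t - 1)}
     \<union> {f. is_flow G f \<and> task_fin_at G \<sigma> (fsrc f) (t - 1)
           \<and> prevf f \<in> {f \<in> act \<sigma>. ffin \<sigma> f = None} \<union> pend \<sigma>}"
  by (auto simp: oes_step_def Let_def)

lemma ffin_oes_step:
  "ffin (oes_step G \<sigma> t) f = ffin \<sigma> f
   \<or> f \<in> act (oes_step G \<sigma> t) \<and> ffin (oes_step G \<sigma> t) f = Some t"
  by (simp add: oes_step_def Let_def)

locale oes_invariant =
  fixes G :: "'j job" and \<sigma> :: "'j oes_state" and t :: nat
  assumes wf: "wf_job G"
    and active_released: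
      "f \<in> act \<sigma> \<union> pend \<sigma> \<Longrightarrow> is_flow G f \<and> task_done_before G \<sigma> (fsrc f) t"
    and released_tracked:
      "is_flow G f \<Longrightarrow> task_done_before G \<sigma> (fsrc f) t \<Longrightarrow>
       f \<in> act \<sigma> \<union> pend \<sigma> \<or> ffin \<sigma> f \<noteq> None"
    and act_pend_disjoint: "act \<sigma> \<inter> pend \<sigma> = {}"
    and pend_waiting: "f \<in> pend \<sigma> \<Longrightarrow> ffin \<sigma> f = None \<and> prevf f \<in> act \<sigma> \<union> pend \<sigma>"
    and act_unfinished_before: "f \<in> act \<sigma> \<Longrightarrow> ffin \<sigma> f = None \<or> ffin \<sigma> f = Some t"
    and finished_released: "ffin \<sigma> f = Some s \<Longrightarrow> s \<le> t \<and> task_done_before G \<sigma> (fsrc f) t"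
    and finished_downward:
      "ffin \<sigma> (j, j', n) \<noteq> None \<Longrightarrow> k \<le> n \<Longrightarrow> is_flow G (j, j', k) \<Longrightarrow>
       ffin \<sigma> (j, j', k) \<noteq> None"
    and act_predecessors_finished:
      "(j, j', n) \<in> act \<sigma> \<Longrightarrow> k < n \<Longrightarrow> is_flow G (j, j', k) \<Longrightarrow>
       \<exists>s<t. ffin \<sigma> (j, j', k) = Some s"
    and iterations_ordered:
      "started \<sigma> (j, n) = Some s \<Longrightarrow> 1 \<le> k \<Longrightarrow> k < n \<Longrightarrow>
       \<exists>s'. started \<sigma> (j, k) = Some s' \<and> s' + jb_ptime G j \<le> s"
begin

abbreviation next_state :: "'j oes_state" where
  "next_state \<equiv> oes_step G \<sigma> (Suc t)"

abbreviation released_now :: "'j flow set" where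
  "released_now \<equiv> {f. is_flow G f \<and> task_fin_at G \<sigma> (fsrc f) t}"

lemma released_now_not_done: "f \<in> released_now \<Longrightarrow> \<not> task_done_before G \<sigma> (fsrc f) t"
  using task_fin_at_not_done_before by blast

lemma released_now_unfinished: "f \<in> released_now \<Longrightarrow> ffin \<sigma> f = None"
  using finished_released released_now_not_done by (meson not_Some_eq)

lemma released_now_fresh: "f \<in> released_now \<Longrightarrow> f \<notin> act \<sigma> \<union> pend \<sigma>"
  using active_released released_now_not_done by blast

lemma released_now_predecessor_released:
  assumes f: "(j, j', k) \<in> released_now" and k: "2 \<le> k"
  shows "is_flow G (j, j', k - 1) \<and> task_done_before G \<sigma> (j, k - 1) t"
proof
  show "is_flow G (j, j', k - 1)"
    using f k is_flow_earlier[of G j j' k "k - 1"] by simp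
  obtain s where s: "started \<sigma> (j, k) = Some s" "s + jb_ptime G j = Suc t"
    using f by (auto simp: task_fin_at_def)
  moreover obtain s' where "started \<sigma> (j, k - 1) = Some s'" "s' + jb_ptime G j \<le> s"
    using iterations_ordered[OF s(1), of "k - 1"] k by force
  moreover have "0 < jb_ptime G j"
    using f is_flow_ptime_pos[OF wf] by auto
  ultimately show "task_done_before G \<sigma> (j, k - 1) t"
    by (auto simp: task_done_before_def)
qed

lemma next_flows_origin: "act next_state \<union> pend next_state \<subseteq> act \<sigma> \<union> pend \<sigma> \<union> released_now"
  by (auto simp: act_oes_step pend_oes_step)

lemma waiting_flows_stay:
  "{f \<in> act \<sigma>. ffin \<sigma> f = None} \<union> pend \<sigma> \<subseteq> act next_state \<union> pend next_state"
  by (auto simp: act_oes_step pend_oes_step)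

lemma next_flows_unfinished: "f \<in> act next_state \<union> pend next_state \<Longrightarrow> ffin \<sigma> f = None"
  using pend_waiting released_now_unfinished
  by (simp only: act_oes_step pend_oes_step diff_Suc_1) blast

lemma ffin_next_state: "ffin \<sigma> f = Some s \<Longrightarrow> ffin next_state f = Some s"
  using ffin_oes_step[of G \<sigma> "Suc t" f] next_flows_unfinished[of f] by auto

lemma ffin_next_state_cases:
  "ffin next_state f \<noteq> None \<Longrightarrow> ffin \<sigma> f \<noteq> None \<or> f \<in> act next_state"
  using ffin_oes_step[of G \<sigma> "Suc t" f] by auto

lemma predecessors_of_next_act_finished:
  assumes f: "(j, j', n) \<in> act next_state" and k: "k < n" "is_flow G (j, j', k)"
  shows "ffin \<sigma> (j, j', k) \<noteq> None"
proof -
  have "k \<le> n - 1"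
    using k by simp
  from f consider
      "(j, j', n) \<in> act \<sigma>"
    | "ffin \<sigma> (j, j', n - 1) = Some t"
    | "(j, j', n) \<in> released_now" "(j, j', n - 1) \<notin> {f \<in> act \<sigma>. ffin \<sigma> f = None} \<union> pend \<sigma>"
    by (auto simp: act_oes_step)
  then show ?thesis
  proof cases
    case 1
    then show ?thesis
      using act_predecessors_finished k by blast
  next
    case 2
    then show ?thesis
      using finished_downward \<open>k \<le> n - 1\<close> k by blast
  next
    case 3
    have "2 \<le> n"
      using k by (simp add: is_flow_iff)
    then have "(j, j', n - 1) \<in> act \<sigma> \<union> pend \<sigma> \<or> ffin \<sigma> (j, j', n - 1) \<noteq> None"
      using released_tracked released_now_predecessor_released[OF 3(1)] by simp
    then have "ffin \<sigma> (j, j', n - 1) \<noteq> None"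
      using 3(2) by auto
    then show ?thesis
      using finished_downward \<open>k \<le> n - 1\<close> k by blast
  qed
qed

lemma next_flows_released:
  assumes f: "f \<in> act next_state \<union> pend next_state"
  shows "is_flow G f \<and> task_done_before G next_state (fsrc f) (Suc t)"
proof (cases "f \<in> released_now")
  case True
  then obtain s where "started \<sigma> (fsrc f) = Some s" "s + jb_ptime G (fst (fsrc f)) = Suc t"
    by (auto simp: task_fin_at_def)
  with True show ?thesis
    by (auto simp: task_done_before_def dest: started_oes_step_keep)
next
  case False
  then have "f \<in> act \<sigma> \<union> pend \<sigma>"
    using f next_flows_origin by blast
  then show ?thesis
    using active_released[of f] task_done_before_oes_step[of G \<sigma> "fsrc f" t "Suc t"] by simp
qed

lemma next_released_tracked:
  assumes f: "is_flow G f" and src_done: "task_done_before G next_state (fsrc f) (Suc t)"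
  shows "f \<in> act next_state \<union> pend next_state \<or> ffin next_state f \<noteq> None"
proof -
  obtain s where s: "started next_state (fsrc f) = Some s" "s + jb_ptime G (fst f) \<le> Suc t"
    using src_done by (cases f) (auto simp: task_done_before_def)
  moreover have "0 < jb_ptime G (fst f)"
    using f is_flow_ptime_pos[OF wf] by (cases f) auto
  ultimately have s_old: "started \<sigma> (fsrc f) = Some s"
    using started_oes_step_cases[OF s(1)] by auto
  show ?thesis
  proof (cases "s + jb_ptime G (fst f) \<le> t")
    case True
    then have "f \<in> act \<sigma> \<union> pend \<sigma> \<or> ffin \<sigma> f \<noteq> None"
      using released_tracked f s_old by (cases f) (auto simp: task_done_before_def)
    then show ?thesis
      using waiting_flows_stay ffin_next_state[of f] by (cases "ffin \<sigma> f") auto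
  next
    case False
    then have "f \<in> released_now"
      using f s s_old by (cases f) (auto simp: task_fin_at_def)
    then show ?thesis
      by (auto simp: act_oes_step pend_oes_step)
  qed
qed

lemma next_act_pend_disjoint: "act next_state \<inter> pend next_state = {}"
proof -
  have False if "f \<in> act next_state" "f \<in> pend next_state" for f
    using that act_pend_disjoint released_now_fresh[of f] by (auto simp: act_oes_step pend_oes_step)
  then show ?thesis
    by blast
qed

lemma next_pend_waiting:
  assumes f: "f \<in> pend next_state"
  shows "ffin next_state f = None \<and> prevf f \<in> act next_state \<union> pend next_state"
proof
  have "f \<notin> act next_state"
    using f next_act_pend_disjoint by blast
  then show "ffin next_state f = None"
    using f next_flows_unfinished ffin_oes_step[of G \<sigma> "Suc t" f] by auto
  have "prevf f \<in> {f \<in> act \<sigma>. ffin \<sigma> f = None} \<union> pend \<sigma>"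
    using f pend_waiting[of f] act_unfinished_before[of "prevf f"] by (auto simp: pend_oes_step)
  then show "prevf f \<in> act next_state \<union> pend next_state"
    using waiting_flows_stay by blast
qed

lemma next_finished_released:
  assumes "ffin next_state f = Some s"
  shows "s \<le> Suc t \<and> task_done_before G next_state (fsrc f) (Suc t)"
  using ffin_oes_step[of G \<sigma> "Suc t" f] assms finished_released[of f s]
    next_flows_released[of f] task_done_before_oes_step[of G \<sigma> "fsrc f" t "Suc t"]
  by auto

lemma next_finished_downward:
  assumes n: "ffin next_state (j, j', n) \<noteq> None" and k: "k \<le> n" "is_flow G (j, j', k)"
  shows "ffin next_state (j, j', k) \<noteq> None"
proof -
  have "ffin \<sigma> (j, j', k) \<noteq> None" if "k < n"
    using ffin_next_state_cases[OF n] finished_downward k predecessors_of_next_act_finished that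
    by blast
  then show ?thesis
    using n k ffin_next_state by (cases "k = n") auto
qed

lemma next_iterations_ordered:
  assumes n: "started next_state (j, n) = Some s" and k: "1 \<le> k" "k < n"
  shows "\<exists>s'. started next_state (j, k) = Some s' \<and> s' + jb_ptime G j \<le> s"
  using started_oes_step_cases[OF n]
proof
  assume "started \<sigma> (j, n) = Some s"
  then show ?thesis
    using iterations_ordered k started_oes_step_keep by blast
next
  assume "s = Suc t \<and> ready G \<sigma> (Suc t) (j, n)"
  then obtain s1 where s1: "started \<sigma> (j, n - 1) = Some s1" "s1 + jb_ptime G j \<le> s"
    using k by (auto simp: ready_def task_done_by_def)
  show ?thesis
  proof (cases "k = n - 1")
    case True
    then show ?thesis
      using s1 started_oes_step_keep by blast
  next
    case False
    then have "k < n - 1"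
      using k by simp
    then obtain s2 where "started \<sigma> (j, k) = Some s2" "s2 + jb_ptime G j \<le> s1"
      using iterations_ordered[OF s1(1) k(1)] by blast
    then show ?thesis
      using s1 started_oes_step_keep by fastforce
  qed
qed

lemma oes_invariant_next_state: "oes_invariant G next_state (Suc t)"
proof unfold_locales
  fix f s j j' n k
  show "wf_job G"
    by (fact wf)
  show "f \<in> act next_state \<union> pend next_state \<Longrightarrow>
        is_flow G f \<and> task_done_before G next_state (fsrc f) (Suc t)"
    by (fact next_flows_released)
  show "is_flow G f \<Longrightarrow> task_done_before G next_state (fsrc f) (Suc t) \<Longrightarrow>
        f \<in> act next_state \<union> pend next_state \<or> ffin next_state f \<noteq> None"
    by (fact next_released_tracked)
  show "act next_state \<inter> pend next_state = {}"
    by (fact next_act_pend_disjoint)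
  show "f \<in> pend next_state \<Longrightarrow> ffin next_state f = None \<and> prevf f \<in> act next_state \<union> pend next_state"
    by (fact next_pend_waiting)
  show "f \<in> act next_state \<Longrightarrow> ffin next_state f = None \<or> ffin next_state f = Some (Suc t)"
    using ffin_oes_step[of G \<sigma> "Suc t" f] next_flows_unfinished by auto
  show "ffin next_state f = Some s \<Longrightarrow> s \<le> Suc t \<and> task_done_before G next_state (fsrc f) (Suc t)"
    by (fact next_finished_released)
  show "ffin next_state (j, j', n) \<noteq> None \<Longrightarrow> k \<le> n \<Longrightarrow> is_flow G (j, j', k) \<Longrightarrow>
        ffin next_state (j, j', k) \<noteq> None"
    by (fact next_finished_downward)
  show "(j, j', n) \<in> act next_state \<Longrightarrow> k < n \<Longrightarrow> is_flow G (j, j', k) \<Longrightarrow>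
        \<exists>s<Suc t. ffin next_state (j, j', k) = Some s"
    using predecessors_of_next_act_finished finished_released ffin_next_state
    by (metis le_imp_less_Suc not_Some_eq)
  show "started next_state (j, n) = Some s \<Longrightarrow> 1 \<le> k \<Longrightarrow> k < n \<Longrightarrow>
        \<exists>s'. started next_state (j, k) = Some s' \<and> s' + jb_ptime G j \<le> s"
    by (fact next_iterations_ordered)
qed

lemma act_same_pair_same_iteration:
  assumes "(j, j', k) \<in> act \<sigma>" and "(j, j', n) \<in> act \<sigma>"
  shows "k = n"
proof -
  have "\<not> k < n" if k: "(j, j', k) \<in> act \<sigma>" and n: "(j, j', n) \<in> act \<sigma>" for k n
  proof
    assume "k < n"
    moreover have "is_flow G (j, j', k)"
      using active_released k by blast
    ultimately obtain s where "s < t" "ffin \<sigma> (j, j', k) = Some s"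
      using act_predecessors_finished n by blast
    with act_unfinished_before[OF k] show False
      by simp
  qed
  then show ?thesis
    using assms by (meson linorder_neqE_nat)
qed

lemma card_act_le_card_pairs:
  "card {f \<in> act \<sigma>. Q (fst f) (fst (snd f))} \<le> card {(j, j'). interm G j j' \<and> Q j j'}"
proof (rule card_inj_on_le)
  show "inj_on (\<lambda>f. (fst f, fst (snd f))) {f \<in> act \<sigma>. Q (fst f) (fst (snd f))}"
    by (auto simp: inj_on_def dest: act_same_pair_same_iteration)
  show "(\<lambda>f. (fst f, fst (snd f))) ` {f \<in> act \<sigma>. Q (fst f) (fst (snd f))}
        \<subseteq> {(j, j'). interm G j j' \<and> Q j j'}"
    using active_released by (force simp: is_flow_def)
  have "{(j, j'). interm G j j' \<and> Q j j'} \<subseteq> jb_tasks G \<times> jb_tasks G"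
    by (auto simp: interm_def edge_def)
  moreover have "finite (jb_tasks G \<times> jb_tasks G)"
    using wf by (simp add: wf_job_def)
  ultimately show "finite {(j, j'). interm G j j' \<and> Q j j'}"
    by (rule finite_subset)
qed

end

lemma oes_invariant_init: "wf_job G \<Longrightarrow> oes_invariant G oes_init 0"
  by unfold_locales (auto simp: oes_init_def task_done_before_def)

lemma oes_invariant_run: "wf_job G \<Longrightarrow> oes_invariant G (oes_run G t) t"
  by (induction t) (auto intro: oes_invariant_init oes_invariant.oes_invariant_next_state)

theorem lemma1:
  fixes G :: "'j job" and t m :: nat
  assumes "wf_job G"
    and "1 \<le> t"
    and "m \<in> {1..jb_M G}"
  shows "Delta_in G t m \<le> hat_Delta_in G m \<and> Delta_out G t m \<le> hat_Delta_out G m"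
proof -
  interpret oes_invariant G "oes_run G t" t
    using oes_invariant_run[OF assms(1)] .
  show ?thesis
    using card_act_le_card_pairs[of "\<lambda>j j'. jb_place G j' = m"]
      card_act_le_card_pairs[of "\<lambda>j j'. jb_place G j = m"]
    by (simp add: Delta_in_def Delta_out_def hat_Delta_in_def hat_Delta_out_def
        dst_mach_def src_mach_def)
qed

end
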